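(* Assume that $a_{j\ell}<a_{\ell\ell}$ and $a_{jj}\le a_{j-1,j}\le\cdots\le a_{1j}$ for all $1\le\ell<j\le n$. Then $Y^{\{n\}}=(0,\dots,0,a_{nn}^{-1})^T$ is a global attractor of the system.
   Context: Fix $n\ge 2$. Consider the Lotka–Volterra system $x_i'=b_ix_i(1-\alpha_ix)$, $i\in\{1,\dots,n\}$, where $b_i>0$, $\alpha_i=(a_{i1},\dots,a_{in})$ with $a_{ii}>0$ and $a_{ij}\ge 0$, considered on $\mathbb{R}^n_+$. An equilibrium $x^*\in\mathbb{R}^n_+$ is a global attractor if every solution with $x(0)\in\operatorname{int}\mathbb{R}^n_+$ satisfies $x(t)\to x^*$. *)

theory Defs
  imports "HOL-Analysis.Analysis"
begin

text \<open>Vectors in R^n are represented as functions nat => real on indices 1..n.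
  The Lotka-Volterra vector field: x_i' = b_i x_i (1 - sum_j a_ij x_j).\<close>

definition LV_field :: "nat \<Rightarrow> (nat \<Rightarrow> real) \<Rightarrow> (nat \<Rightarrow> nat \<Rightarrow> real) \<Rightarrow> (nat \<Rightarrow> real) \<Rightarrow> nat \<Rightarrow> real" where
  "LV_field n b a y i = b i * y i * (1 - (\<Sum>j = 1..n. a i j * y j))"

definition LV_solution :: "nat \<Rightarrow> (nat \<Rightarrow> real) \<Rightarrow> (nat \<Rightarrow> nat \<Rightarrow> real) \<Rightarrow> (real \<Rightarrow> nat \<Rightarrow> real) \<Rightarrow> bool" where
  "LV_solution n b a x \<longleftrightarrow>
     (\<forall>t\<ge>0. \<forall>i\<in>{1..n}.
        ((\<lambda>s. x s i) has_real_derivative LV_field n b a (x t) i) (at t within {0..}))"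

end

theory Submission
  imports Defs
begin

(* Under the hypotheses of the corollary, for l < n the log ratio
   ln x_l - (b_l / b_n) ln x_n has derivative b_l sum_k (a_nk - a_lk) x_k, which is
   bounded above by a vanishing term minus a positive multiple of the mass of species
   l..n-1; hence it tends to -infinity, so x_l -> 0.  Induction on l kills species
   1..n-1, and the last species converges to 1 / a_nn. *)

lemma stays_below_barrier:
  fixes w w' :: "real \<Rightarrow> real"
  assumes "T \<le> t" "continuous_on {T..t} w"
    and "\<And>s. T < s \<Longrightarrow> s < t \<Longrightarrow> (w has_real_derivative w' s) (at s)"
    and "\<And>s. T < s \<Longrightarrow> s < t \<Longrightarrow> w s > \<theta> \<Longrightarrow> w' s \<le> 0"
    and "w T \<le> \<theta>"
  shows "w t \<le> \<theta>"
proof -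
  define A where "A = w -` {..\<theta>} \<inter> {T..t}"
  have "closed A"
    unfolding A_def using continuous_on_closed_vimage[of "{T..t}" w] assms(2) by auto
  moreover have "T \<in> A" and bdd: "bdd_above A"
    using assms(1,5) unfolding A_def by (auto intro: bdd_aboveI[of _ t])
  ultimately have "Sup A \<in> A"
    by (intro closed_contains_Sup) auto
  then obtain r where r: "r = Sup A" "T \<le> r" "r \<le> t" "w r \<le> \<theta>"
    unfolding A_def by auto
  have above: "w s > \<theta>" if "r < s" "s \<le> t" for s
  proof (rule ccontr)
    assume "\<not> \<theta> < w s"
    then have "s \<in> A" using that r unfolding A_def by auto
    then show False using cSup_upper[OF _ bdd] that r by fastforce
  qed
  have "w t \<le> w r"
  proof (rule DERIV_nonpos_imp_decreasing_open[where f=w])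
    show "continuous_on {r..t} w"
      using assms(2) by (rule continuous_on_subset) (use r in auto)
    show "\<exists>y. (w has_real_derivative y) (at s) \<and> y \<le> 0" if "r < s" "s < t" for s
      using assms(3,4)[of s] above[of s] that r by (intro exI[of _ "w' s"]) auto
  qed (use r in auto)
  with r show ?thesis by simp
qed

lemma reaches_barrier:
  fixes w w' :: "real \<Rightarrow> real"
  assumes "\<kappa> > 0" "t \<ge> T + max 0 ((w T - \<theta>) / \<kappa>)" "continuous_on {T..t} w"
    and "\<And>s. T < s \<Longrightarrow> s < t \<Longrightarrow> (w has_real_derivative w' s) (at s)"
    and "\<And>s. T < s \<Longrightarrow> s < t \<Longrightarrow> w s > \<theta> \<Longrightarrow> w' s \<le> -\<kappa>"
  shows "w t \<le> \<theta>"
proof (cases "\<exists>s\<in>{T..t}. w s \<le> \<theta>")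
  case True
  then obtain s where s: "T \<le> s" "s \<le> t" "w s \<le> \<theta>" by auto
  show ?thesis
  proof (rule stays_below_barrier[where w=w and T=s and w'=w'])
    show "continuous_on {s..t} w"
      using assms(3) by (rule continuous_on_subset) (use s in auto)
    show "w' u \<le> 0" if "s < u" "u < t" "w u > \<theta>" for u
      using assms(1) assms(5)[of u] that s by simp
  qed (use s assms(4) in auto)
next
  case False
  have "w t + \<kappa> * t \<le> w T + \<kappa> * T"
  proof (rule DERIV_nonpos_imp_decreasing_open[where f="\<lambda>s. w s + \<kappa> * s"])
    show "continuous_on {T..t} (\<lambda>s. w s + \<kappa> * s)"
      using assms(3) by (intro continuous_intros)
    show "\<exists>y. ((\<lambda>s. w s + \<kappa> * s) has_real_derivative y) (at s) \<and> y \<le> 0"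
      if "T < s" "s < t" for s
    proof -
      have "w s > \<theta>" using False that by (auto simp: not_le)
      then show ?thesis
        using that assms(4,5)[of s]
        by (intro exI[of _ "w' s + \<kappa>"]) (auto intro!: derivative_eq_intros)
    qed
  qed (use assms(2) in \<open>simp add: max_def split: if_splits\<close>)
  moreover have "(w T - \<theta>) / \<kappa> \<le> t - T"
    using assms(2) by simp
  then have "w T - \<theta> \<le> \<kappa> * (t - T)"
    using assms(1) by (simp add: pos_divide_le_eq mult.commute)
  ultimately show ?thesis by (simp add: right_diff_distrib)
qed

lemma eventually_below_by_drift:
  fixes w w' :: "real \<Rightarrow> real"
  assumes "\<kappa> > 0"
    and "eventually (\<lambda>s. (w has_real_derivative w' s) (at s)) at_top"
    and "eventually (\<lambda>s. w s > \<theta> \<longrightarrow> w' s \<le> -\<kappa>) at_top"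
  shows "eventually (\<lambda>t. w t \<le> \<theta>) at_top"
proof -
  obtain T where T: "\<And>s. s \<ge> T \<Longrightarrow> (w has_real_derivative w' s) (at s) \<and> (w s > \<theta> \<longrightarrow> w' s \<le> -\<kappa>)"
    using eventually_conj[OF assms(2,3)] by (auto simp: eventually_at_top_linorder)
  have "w t \<le> \<theta>" if "t \<ge> T + max 0 ((w T - \<theta>) / \<kappa>)" for t
  proof (rule reaches_barrier[where w=w and T=T and w'=w'])
    show "continuous_on {T..t} w"
    proof (intro continuous_at_imp_continuous_on ballI)
      fix s assume "s \<in> {T..t}"
      then show "isCont w s" using T[of s] DERIV_isCont by auto
    qed
    show "(w has_real_derivative w' s) (at s)" if "T < s" "s < t" for s
      using T[of s] that by simp
    show "w' s \<le> -\<kappa>" if "T < s" "s < t" "w s > \<theta>" for s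
      using T[of s] that by simp
  qed (use that assms(1) in auto)
  then show ?thesis by (auto simp: eventually_at_top_linorder)
qed

lemma positive_of_log_derivative:
  fixes f g :: "real \<Rightarrow> real"
  assumes "f 0 > 0" "continuous_on {0..} f" "continuous_on {0..} g"
    and "\<And>s. s > 0 \<Longrightarrow> (f has_real_derivative f s * g s) (at s)"
    and "t \<ge> 0"
  shows "f t > 0"
proof (rule ccontr)
  assume "\<not> f t > 0"
  define Z where "Z = f -` {..0} \<inter> {0..t}"
  have cont: "continuous_on {0..t} f"
    using assms(2) by (rule continuous_on_subset) auto
  then have "closed Z"
    unfolding Z_def using continuous_on_closed_vimage[of "{0..t}" f] by auto
  moreover have "t \<in> Z" and bdd: "bdd_below Z"
    using \<open>\<not> f t > 0\<close> assms(5) unfolding Z_def by (auto intro: bdd_belowI[of _ 0])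
  ultimately have "Inf Z \<in> Z"
    by (intro closed_contains_Inf) auto
  then obtain t0 where t0: "t0 = Inf Z" "0 \<le> t0" "t0 \<le> t" "f t0 \<le> 0"
    unfolding Z_def by auto
  have before: "f s > 0" if "0 \<le> s" "s < t0" for s
    using cInf_lower[OF _ bdd, of s] that t0 unfolding Z_def by fastforce
  obtain M where M: "\<And>s. s \<in> {0..t} \<Longrightarrow> g s \<ge> -M"
  proof -
    have "continuous_on {0..t} g"
      using assms(3) by (rule continuous_on_subset) auto
    then obtain s0 where "\<forall>s\<in>{0..t}. g s0 \<le> g s"
      using continuous_attains_inf[of "{0..t}" g] assms(5) by auto
    then show ?thesis using that[of "- g s0"] by auto
  qed
  (* Since g \<ge> -M, the weighted function f s * exp (M * s) is nondecreasing before t0. *)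
  have "f 0 * exp (M * 0) \<le> f t0 * exp (M * t0)"
  proof (rule DERIV_nonneg_imp_increasing_open[where f="\<lambda>s. f s * exp (M * s)"])
    have "continuous_on {0..t0} f"
      using cont by (rule continuous_on_subset) (use t0 in auto)
    then show "continuous_on {0..t0} (\<lambda>s. f s * exp (M * s))"
      by (intro continuous_intros)
    show "\<exists>y. ((\<lambda>s. f s * exp (M * s)) has_real_derivative y) (at s) \<and> y \<ge> 0"
      if "0 < s" "s < t0" for s
    proof (intro exI conjI)
      show "((\<lambda>s. f s * exp (M * s)) has_real_derivative
              f s * (g s + M) * exp (M * s)) (at s)"
        using assms(4)[of s] that by (auto intro!: derivative_eq_intros simp: algebra_simps)
      show "f s * (g s + M) * exp (M * s) \<ge> 0"
        using before[of s] M[of s] that t0 by auto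
    qed
  qed (use t0 in auto)
  moreover have "f t0 * exp (M * t0) \<le> 0"
    using t0(4) by (simp add: mult_nonpos_nonneg)
  ultimately show False
    using assms(1) by simp
qed

lemma tendsto_zero_of_ln_at_bot:
  fixes f :: "'a \<Rightarrow> real"
  assumes "eventually (\<lambda>t. f t > 0) F" "filterlim (\<lambda>t. ln (f t)) at_bot F"
  shows "(f \<longlongrightarrow> 0) F"
proof -
  have "((\<lambda>t. exp (ln (f t))) \<longlongrightarrow> 0) F"
    using filterlim_compose[OF exp_at_bot assms(2)] .
  then show ?thesis
    by (rule Lim_transform_eventually) (use assms(1) in \<open>auto elim: eventually_mono\<close>)
qed

lemma sum_split_at:
  fixes f :: "nat \<Rightarrow> 'a::comm_monoid_add"
  assumes "1 \<le> l" "l \<le> n"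
  shows "(\<Sum>j = 1..n. f j) = (\<Sum>j = 1..<l. f j) + (\<Sum>j = l..n. f j)"
proof -
  have "{1..n} = {1..<l} \<union> {l..n}" using assms by auto
  moreover have "sum f ({1..<l} \<union> {l..n}) = sum f {1..<l} + sum f {l..n}"
    by (rule sum.union_disjoint) auto
  ultimately show ?thesis by simp
qed

lemma sum_split_last:
  fixes f :: "nat \<Rightarrow> 'a::comm_monoid_add"
  assumes "l \<le> n"
  shows "(\<Sum>j = l..n. f j) = (\<Sum>j = l..<n. f j) + f n"
proof -
  have "{l..n} = insert n {l..<n}" using assms by auto
  then show ?thesis by (simp add: add.commute)
qed

locale LV_trajectory =
  fixes n :: nat and b :: "nat \<Rightarrow> real" and a :: "nat \<Rightarrow> nat \<Rightarrow> real"
    and x :: "real \<Rightarrow> nat \<Rightarrow> real"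
  assumes n_pos: "n \<ge> 1"
    and b_pos: "\<forall>i\<in>{1..n}. b i > 0"
    and a_diag: "\<forall>i\<in>{1..n}. a i i > 0"
    and a_nonneg: "\<forall>i\<in>{1..n}. \<forall>j\<in>{1..n}. a i j \<ge> 0"
    and solution: "LV_solution n b a x"
    and initial_pos: "\<forall>i\<in>{1..n}. x 0 i > 0"
begin

definition rate :: "real \<Rightarrow> nat \<Rightarrow> real" where
  "rate t i = b i * (1 - (\<Sum>j = 1..n. a i j * x t j))"

lemma solution_deriv_within:
  assumes "t \<ge> 0" "i \<in> {1..n}"
  shows "((\<lambda>s. x s i) has_real_derivative x t i * rate t i) (at t within {0..})"
proof -
  have "LV_field n b a (x t) i = x t i * rate t i"
    unfolding LV_field_def rate_def by simp
  with solution assms show ?thesis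
    unfolding LV_solution_def by metis
qed

lemma solution_deriv:
  assumes "t > 0" "i \<in> {1..n}"
  shows "((\<lambda>s. x s i) has_real_derivative x t i * rate t i) (at t)"
proof -
  have "at t within {0..} = at t"
    using assms(1) by (intro at_within_interior) simp
  with solution_deriv_within[of t i] assms show ?thesis by simp
qed

lemma eventually_solution_deriv:
  assumes "i \<in> {1..n}"
  shows "eventually (\<lambda>t. ((\<lambda>s. x s i) has_real_derivative x t i * rate t i) (at t)) at_top"
  using eventually_gt_at_top[of 0] by (rule eventually_mono) (use solution_deriv assms in auto)

lemma continuous_component: "i \<in> {1..n} \<Longrightarrow> continuous_on {0..} (\<lambda>s. x s i)"
  unfolding continuous_on_eq_continuous_within
  using solution_deriv_within DERIV_continuous by (metis atLeast_iff)

lemma continuous_component_on: "i \<in> {1..n} \<Longrightarrow> 0 \<le> u \<Longrightarrow> continuous_on {u..v} (\<lambda>s. x s i)"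
  using continuous_component by (rule continuous_on_subset) auto

lemma continuous_rate: "continuous_on {0..} (\<lambda>s. rate s i)"
  unfolding rate_def by (intro continuous_intros continuous_component) auto

lemma species_pos:
  assumes "t \<ge> 0" "i \<in> {1..n}"
  shows "x t i > 0"
proof (rule positive_of_log_derivative[where f="\<lambda>s. x s i" and g="\<lambda>s. rate s i"])
  show "((\<lambda>s. x s i) has_real_derivative x s i * rate s i) (at s)" if "s > 0" for s
    using solution_deriv that assms(2) by blast
qed (use assms initial_pos continuous_component continuous_rate in auto)

lemma interaction_ge_diag:
  assumes "t \<ge> 0" "i \<in> {1..n}"
  shows "(\<Sum>j = 1..n. a i j * x t j) \<ge> a i i * x t i"
proof (rule member_le_sum)
  fix j assume "j \<in> {1..n} - {i}"
  then show "a i j * x t j \<ge> 0"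
    using assms a_nonneg species_pos[of t j] by (simp add: less_imp_le)
qed (use assms in auto)

text \<open>Each species is bounded by the larger of its initial value and its carrying
  capacity \<open>1 / a i i\<close>: above the capacity its growth rate is negative.\<close>
lemma bounded_above:
  assumes "t \<ge> 0" "i \<in> {1..n}"
  shows "x t i \<le> max (x 0 i) (1 / a i i)"
proof (rule stays_below_barrier[where w="\<lambda>s. x s i" and w'="\<lambda>s. x s i * rate s i" and T=0])
  show "x s i * rate s i \<le> 0" if "0 < s" "s < t" "x s i > max (x 0 i) (1 / a i i)" for s
  proof -
    have "a i i * x s i > 1"
      using that a_diag assms(2) by (simp add: field_simps)
    then have "rate s i < 0"
      unfolding rate_def using interaction_ge_diag[of s i] that assms(2) b_pos
      by (simp add: mult_pos_neg)
    then show ?thesis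
      using species_pos[of s i] that assms(2) by (simp add: mult_pos_neg less_imp_le)
  qed
qed (use assms solution_deriv continuous_component_on in auto)

lemma eventually_below_capacity:
  assumes "i \<in> {1..n}" "c > 1 / a i i"
  shows "eventually (\<lambda>t. x t i < c) at_top"
proof -
  define \<theta> where "\<theta> = (1 / a i i + c) / 2"
  have aii: "a i i > 0" and bi: "b i > 0" using assms(1) a_diag b_pos by auto
  then have \<theta>: "\<theta> > 1 / a i i" "\<theta> < c" "\<theta> > 0"
    unfolding \<theta>_def using assms(2) by (auto simp: field_simps)
  define \<kappa> where "\<kappa> = \<theta> * b i * (a i i * \<theta> - 1)"
  have \<kappa>: "\<kappa> > 0"
    unfolding \<kappa>_def using \<theta> aii bi by (simp add: field_simps)
  have "eventually (\<lambda>t. x t i \<le> \<theta>) at_top"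
  proof (rule eventually_below_by_drift[where w'="\<lambda>s. x s i * rate s i", OF \<kappa>])
    show "eventually (\<lambda>s. ((\<lambda>s. x s i) has_real_derivative x s i * rate s i) (at s)) at_top"
      using eventually_solution_deriv assms(1) .
    have drift: "x s i * rate s i \<le> -\<kappa>" if "s > 0" "x s i > \<theta>" for s
    proof -
      have "a i i * x s i > a i i * \<theta>" using that aii by simp
      then have "rate s i \<le> b i * (1 - a i i * \<theta>)"
        unfolding rate_def using interaction_ge_diag[of s i] that assms(1) bi by simp
      moreover have "b i * (1 - a i i * \<theta>) < 0"
        using \<theta> aii bi by (simp add: field_simps mult_pos_neg)
      ultimately have "x s i * rate s i \<le> x s i * (b i * (1 - a i i * \<theta>))"
        using species_pos[of s i] that assms(1) by (intro mult_left_mono) auto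
      also have "\<dots> \<le> \<theta> * (b i * (1 - a i i * \<theta>))"
        using that \<open>b i * (1 - a i i * \<theta>) < 0\<close> by (intro mult_right_mono_neg) auto
      finally have "x s i * rate s i \<le> \<theta> * (b i * (1 - a i i * \<theta>))" .
      then show ?thesis unfolding \<kappa>_def by (simp add: algebra_simps)
    qed
    show "eventually (\<lambda>s. x s i > \<theta> \<longrightarrow> x s i * rate s i \<le> -\<kappa>) at_top"
      using eventually_gt_at_top[of 0] by (rule eventually_mono) (use drift in auto)
  qed
  then show ?thesis by (rule eventually_mono) (use \<theta> in auto)
qed

text \<open>A common bound for all interaction coefficients, used to control the total
  competitive pressure by the total population.\<close>
definition interaction_bound :: real where
  "interaction_bound = (\<Sum>i = 1..n. \<Sum>j = 1..n. a i j)"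

lemma coeff_le_interaction_bound:
  assumes "i \<in> {1..n}" "j \<in> {1..n}"
  shows "a i j \<le> interaction_bound"
proof -
  have "a i j \<le> (\<Sum>j = 1..n. a i j)"
    using assms a_nonneg by (intro member_le_sum) auto
  also have "\<dots> \<le> interaction_bound"
    unfolding interaction_bound_def using assms(1) a_nonneg
    by (intro member_le_sum[of i "{1..n}" "\<lambda>i. \<Sum>j = 1..n. a i j"] sum_nonneg) auto
  finally show ?thesis .
qed

lemma interaction_bound_pos: "interaction_bound > 0"
  using coeff_le_interaction_bound[of 1 1] a_diag n_pos by force

lemma rate_nonneg_if_total_small:
  assumes "t \<ge> 0" "k \<in> {1..n}" "interaction_bound * (\<Sum>j = 1..n. x t j) \<le> 1"
  shows "rate t k \<ge> 0"
proof -
  have "(\<Sum>j = 1..n. a k j * x t j) \<le> (\<Sum>j = 1..n. interaction_bound * x t j)"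
    using coeff_le_interaction_bound[OF assms(2)] species_pos[OF assms(1)]
    by (intro sum_mono mult_right_mono) (auto intro: less_imp_le)
  with assms(3) have "(\<Sum>j = 1..n. a k j * x t j) \<le> 1"
    by (simp add: sum_distrib_left)
  then show ?thesis
    unfolding rate_def using b_pos assms(2) by (simp add: less_imp_le)
qed

text \<open>Persistence: once all species with index below \<open>l\<close> die out, the species
  \<open>l, \<dots>, n\<close> keep a positive total population, because a small total population
  makes every growth rate nonnegative.\<close>
lemma persistence:
  assumes l: "1 \<le> l" "l \<le> n"
    and vanish: "\<forall>k\<in>{1..<l}. ((\<lambda>t. x t k) \<longlongrightarrow> 0) at_top"
  shows "\<exists>\<sigma>>0. eventually (\<lambda>t. (\<Sum>k = l..n. x t k) \<ge> \<sigma>) at_top"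
proof -
  define c where "c = 1 / (2 * interaction_bound)"
  have c: "c > 0" "interaction_bound * (2 * c) = 1"
    unfolding c_def using interaction_bound_pos by auto
  define E where "E t = (\<Sum>k = 1..<l. x t k)" for t
  define S where "S t = (\<Sum>k = l..n. x t k)" for t
  have "(E \<longlongrightarrow> 0) at_top"
    unfolding E_def by (rule tendsto_null_sum) (use vanish in auto)
  from order_tendstoD(2)[OF this c(1)]
  obtain T0 where T0: "\<And>t. t \<ge> T0 \<Longrightarrow> E t < c"
    by (auto simp: eventually_at_top_linorder)
  define T where "T = max T0 0"
  have S_pos: "S t > 0" if "t \<ge> 0" for t
    unfolding S_def using l species_pos that by (intro sum_pos) auto
  define \<sigma> where "\<sigma> = min (S T) c"
  have "S t \<ge> \<sigma>" if "t \<ge> T" for t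
  proof -
    have "- S t \<le> - \<sigma>"
    proof (rule stays_below_barrier[where w="\<lambda>s. - S s" and T=T
          and w'="\<lambda>s. - (\<Sum>k = l..n. x s k * rate s k)"])
      show "continuous_on {T..t} (\<lambda>s. - S s)"
        unfolding S_def T_def using l by (intro continuous_intros continuous_component_on) auto
      show "((\<lambda>s. - S s) has_real_derivative - (\<Sum>k = l..n. x s k * rate s k)) (at s)"
        if "T < s" for s
        unfolding S_def using that l T_def
        by (auto intro!: derivative_eq_intros solution_deriv)
      show "- (\<Sum>k = l..n. x s k * rate s k) \<le> 0" if "T < s" "- S s > - \<sigma>" for s
      proof -
        have s: "s \<ge> 0" "E s < c" "S s < c"
          using that T0[of s] unfolding T_def \<sigma>_def by auto
        have "(\<Sum>j = 1..n. x s j) = E s + S s"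
          unfolding E_def S_def using sum_split_at[OF l] .
        also have "\<dots> \<le> 2 * c" using s by simp
        finally have "interaction_bound * (\<Sum>j = 1..n. x s j) \<le> interaction_bound * (2 * c)"
          using interaction_bound_pos by (intro mult_left_mono) auto
        then have total_small: "interaction_bound * (\<Sum>j = 1..n. x s j) \<le> 1"
          using c(2) by simp
        have "x s k * rate s k \<ge> 0" if "k \<in> {l..n}" for k
        proof -
          have k: "k \<in> {1..n}" using that l by auto
          show ?thesis
            using rate_nonneg_if_total_small[OF s(1) k total_small] species_pos[OF s(1) k] by simp
        qed
        then have "(\<Sum>k = l..n. x s k * rate s k) \<ge> 0"
          by (rule sum_nonneg)
        then show ?thesis by simp
      qed
    qed (use that \<sigma>_def in auto)
    then show ?thesis by simp
  qed
  moreover have "\<sigma> > 0"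
    unfolding \<sigma>_def T_def using S_pos c by simp
  ultimately show ?thesis
    unfolding S_def eventually_at_top_linorder by blast
qed

text \<open>Once the species \<open>1, \<dots>, n - 1\<close> die out, the last species is eventually
  above any level below its carrying capacity: it persists, and near extinction of the
  others its growth rate is bounded away from zero below the capacity.\<close>
lemma eventually_above_last_capacity:
  assumes vanish: "\<forall>k\<in>{1..<n}. ((\<lambda>t. x t k) \<longlongrightarrow> 0) at_top"
    and c: "c < 1 / a n n"
  shows "eventually (\<lambda>t. x t n > c) at_top"
proof -
  have n: "n \<in> {1..n}" using n_pos by auto
  have ann: "a n n > 0" and bn: "b n > 0" using n a_diag b_pos by auto
  obtain \<sigma> where \<sigma>: "\<sigma> > 0" and ev_\<sigma>: "eventually (\<lambda>t. x t n \<ge> \<sigma>) at_top"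
    using persistence[of n] vanish n_pos by auto
  define \<theta> where "\<theta> = (c + 1 / a n n) / 2"
  define \<delta> where "\<delta> = (1 - a n n * \<theta>) / 2"
  have \<theta>: "\<theta> > c" and \<delta>: "\<delta> > 0"
    unfolding \<delta>_def \<theta>_def using c ann by (auto simp: field_simps)
  define E where "E t = (\<Sum>k = 1..<n. a n k * x t k)" for t
  have "(E \<longlongrightarrow> 0) at_top"
    unfolding E_def using vanish by (intro tendsto_null_sum tendsto_mult_right_zero) auto
  from order_tendstoD(2)[OF this \<delta>] have ev_E: "eventually (\<lambda>t. E t < \<delta>) at_top" .
  have rate_n: "rate t n = b n * (1 - E t - a n n * x t n)" for t
    unfolding rate_def E_def using sum_split_last[of 1 n "\<lambda>j. a n j * x t j"] n_pos
    by (simp add: algebra_simps)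
  define \<kappa> where "\<kappa> = \<sigma> * (b n * \<delta>)"
  have \<kappa>: "\<kappa> > 0" unfolding \<kappa>_def using \<sigma> bn \<delta> by simp
  have "eventually (\<lambda>t. - x t n \<le> - \<theta>) at_top"
  proof (rule eventually_below_by_drift[where w'="\<lambda>s. - (x s n * rate s n)", OF \<kappa>])
    show "eventually (\<lambda>s. ((\<lambda>s. - x s n) has_real_derivative - (x s n * rate s n)) (at s)) at_top"
      using eventually_solution_deriv[OF n] by (rule eventually_mono) (rule DERIV_minus)
    have drift: "- (x s n * rate s n) \<le> - \<kappa>"
      if "s > 0" "x s n \<ge> \<sigma>" "E s < \<delta>" "x s n < \<theta>" for s
    proof -
      have "a n n * x s n \<le> a n n * \<theta>" using that ann by simp
      moreover have "1 - a n n * \<theta> = 2 * \<delta>" unfolding \<delta>_def by simp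
      ultimately have "\<delta> \<le> 1 - E s - a n n * x s n" using that by linarith
      then have "b n * \<delta> \<le> rate s n"
        unfolding rate_n using bn by (intro mult_left_mono) auto
      then have "\<sigma> * (b n * \<delta>) \<le> x s n * rate s n"
        using that \<sigma> bn \<delta> by (intro mult_mono) auto
      then show ?thesis unfolding \<kappa>_def by simp
    qed
    show "eventually (\<lambda>s. - x s n > - \<theta> \<longrightarrow> - (x s n * rate s n) \<le> - \<kappa>) at_top"
      using eventually_conj[OF eventually_gt_at_top[of 0] eventually_conj[OF ev_\<sigma> ev_E]]
      by (rule eventually_mono) (use drift in auto)
  qed
  then show ?thesis by (rule eventually_mono) (use \<theta> in auto)
qed

lemma last_species_limit:
  assumes "\<forall>k\<in>{1..<n}. ((\<lambda>t. x t k) \<longlongrightarrow> 0) at_top"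
  shows "((\<lambda>t. x t n) \<longlongrightarrow> 1 / a n n) at_top"
  using eventually_above_last_capacity[OF assms] eventually_below_capacity[of n] n_pos
  by (intro order_tendstoI) auto

end

text \<open>The hypotheses of the corollary: every species \<open>l\<close> is hurt less by the
  later species \<open>j > l\<close> than by itself, and the effect of species \<open>j\<close> decreases
  along \<open>1, \<dots>, j\<close>.\<close>
locale LV_dominated = LV_trajectory +
  assumes n2: "n \<ge> 2"
    and h1: "\<forall>l j. 1 \<le> l \<and> l < j \<and> j \<le> n \<longrightarrow> a j l < a l l"
    and h2: "\<forall>i j. 1 \<le> i \<and> i < j \<and> j \<le> n \<longrightarrow> a (i + 1) j \<le> a i j"
begin

lemma diag_le_column:
  assumes "1 \<le> l" "l \<le> k" "k \<le> n"
  shows "a k k \<le> a l k"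
  using assms
proof (induction "k - l" arbitrary: l)
  case 0
  then show ?case by simp
next
  case (Suc d)
  have "a k k \<le> a (l + 1) k" using Suc.hyps(1)[of "l + 1"] Suc by simp
  also have "\<dots> \<le> a l k" using h2 Suc by simp
  finally show ?case .
qed

definition gap :: real where
  "gap = Min ((\<lambda>k. a k k - a n k) ` {1..<n})"

lemma gap_pos: "gap > 0"
proof -
  have "gap \<in> (\<lambda>k. a k k - a n k) ` {1..<n}"
    unfolding gap_def using n2 by (intro Min_in) auto
  then show ?thesis using h1 by auto
qed

lemma gap_le: "k \<in> {1..<n} \<Longrightarrow> gap \<le> a k k - a n k"
  unfolding gap_def by (rule Min_le) auto

text \<open>The Lyapunov-type function comparing species \<open>l\<close> with the last species; its
  derivative only involves the differences \<open>a n k - a l k\<close>.\<close>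
definition log_ratio :: "nat \<Rightarrow> real \<Rightarrow> real" where
  "log_ratio l t = ln (x t l) - b l / b n * ln (x t n)"

lemma log_ratio_derivative:
  assumes "l \<in> {1..n}" "t > 0"
  shows "(log_ratio l has_real_derivative b l * (\<Sum>k = 1..n. (a n k - a l k) * x t k)) (at t)"
proof -
  have n: "n \<in> {1..n}" using n_pos by auto
  have pos: "x t l > 0" "x t n > 0" "b n > 0"
    using species_pos assms n b_pos by auto
  have "(log_ratio l has_real_derivative
          x t l * rate t l / x t l - b l / b n * (x t n * rate t n / x t n)) (at t)"
    unfolding log_ratio_def [abs_def]
    using solution_deriv[OF assms(2,1)] solution_deriv[OF assms(2) n] pos
    by (auto intro!: derivative_eq_intros)
  moreover have "x t l * rate t l / x t l - b l / b n * (x t n * rate t n / x t n)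
      = rate t l - b l / b n * rate t n"
    using pos by simp
  also have "\<dots> = b l * (1 - (\<Sum>k = 1..n. a l k * x t k)) - b l * (1 - (\<Sum>k = 1..n. a n k * x t k))"
    unfolding rate_def using pos by simp
  also have "\<dots> = b l * (\<Sum>k = 1..n. (a n k - a l k) * x t k)"
    by (simp add: right_diff_distrib left_diff_distrib sum_subtractf)
  ultimately show ?thesis by simp
qed

lemma drift_bound:
  assumes l: "l \<in> {1..<n}" and t: "t \<ge> 0"
  shows "(\<Sum>k = 1..n. (a n k - a l k) * x t k)
           \<le> (\<Sum>k = 1..<l. a n k * x t k) - gap * (\<Sum>k = l..<n. x t k)"
proof -
  let ?f = "\<lambda>k. (a n k - a l k) * x t k"
  have nonneg: "x t k \<ge> 0" if "k \<in> {1..n}" for k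
    using species_pos[OF t that] by simp
  have "(\<Sum>k = 1..n. ?f k) = (\<Sum>k = 1..<l. ?f k) + (\<Sum>k = l..<n. ?f k) + ?f n"
    using sum_split_at[of l n ?f] sum_split_last[of l n ?f] l by simp
  also have "\<dots> \<le> (\<Sum>k = 1..<l. a n k * x t k) + (\<Sum>k = l..<n. - gap * x t k) + 0"
  proof (intro add_mono sum_mono)
    fix k assume k: "k \<in> {1..<l}"
    then show "?f k \<le> a n k * x t k"
      using a_nonneg l nonneg[of k] by (intro mult_right_mono) auto
  next
    fix k assume k: "k \<in> {l..<n}"
    then have "a k k \<le> a l k" using diag_le_column[of l k] l by auto
    then have "a n k - a l k \<le> - gap" using gap_le[of k] k l by auto
    then show "?f k \<le> - gap * x t k"
      using k l nonneg[of k] by (intro mult_right_mono) auto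
  next
    have "a n n \<le> a l n" using diag_le_column[of l n] l by auto
    then show "?f n \<le> 0"
      using nonneg[of n] n_pos by (simp add: mult_nonpos_nonneg)
  qed
  finally show ?thesis by (simp add: sum_negf sum_distrib_left)
qed

text \<open>If the species \<open>l, \<dots>, n\<close> have total mass at least \<open>\<sigma>\<close> and the log ratio
  exceeds \<open>\<theta>\<close>, then the species \<open>l, \<dots>, n - 1\<close> carry a mass bounded below in terms
  of \<open>\<sigma>\<close> and \<open>\<theta>\<close> only: either \<open>x n\<close> is small, or it is large and then so is \<open>x l\<close>.\<close>
lemma mass_below_last:
  assumes l: "l \<in> {1..<n}" and t: "t \<ge> 0" and \<sigma>: "\<sigma> > 0"
    and mass: "(\<Sum>k = l..n. x t k) \<ge> \<sigma>" and large: "log_ratio l t > \<theta>"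
  shows "(\<Sum>k = l..<n. x t k) \<ge> min (\<sigma> / 2) (exp (\<theta> + b l / b n * ln (\<sigma> / 2)))"
proof (cases "(\<Sum>k = l..<n. x t k) \<ge> \<sigma> / 2")
  case True
  then show ?thesis by simp
next
  case False
  have pos: "x t k > 0" if "k \<in> {1..n}" for k
    using species_pos[OF t that] .
  have "x t n \<ge> \<sigma> / 2"
    using False mass sum_split_last[of l n "x t"] l by simp
  then have "ln (x t n) \<ge> ln (\<sigma> / 2)"
    using \<sigma> by simp
  moreover have "b l / b n > 0" using b_pos l by auto
  ultimately have "b l / b n * ln (x t n) \<ge> b l / b n * ln (\<sigma> / 2)"
    by (intro mult_left_mono) auto
  then have "ln (x t l) > \<theta> + b l / b n * ln (\<sigma> / 2)"
    using large unfolding log_ratio_def by simp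
  then have "x t l > exp (\<theta> + b l / b n * ln (\<sigma> / 2))"
    using pos[of l] l by (simp add: ln_less_cancel_iff[symmetric] del: ln_less_cancel_iff)
  moreover have "x t l \<le> (\<Sum>k = l..<n. x t k)"
    using l pos by (intro member_le_sum) (auto intro: less_imp_le)
  ultimately show ?thesis by simp
qed

text \<open>Key step: if the species below \<open>l\<close> die out, the log ratio of species \<open>l\<close> to
  the last species tends to \<open>-\<infinity>\<close>, since above any level it decreases at a fixed rate.\<close>
lemma log_ratio_at_bot:
  assumes l: "l \<in> {1..<n}"
    and vanish: "\<forall>k\<in>{1..<l}. ((\<lambda>t. x t k) \<longlongrightarrow> 0) at_top"
  shows "filterlim (log_ratio l) at_bot at_top"
  unfolding filterlim_at_bot
proof
  fix \<theta> :: real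
  have l1: "l \<in> {1..n}" using l by auto
  obtain \<sigma> where \<sigma>: "\<sigma> > 0" and ev_mass: "eventually (\<lambda>t. (\<Sum>k = l..n. x t k) \<ge> \<sigma>) at_top"
    using persistence[of l] vanish l by auto
  define \<rho> where "\<rho> = min (\<sigma> / 2) (exp (\<theta> + b l / b n * ln (\<sigma> / 2)))"
  have \<rho>: "\<rho> > 0" unfolding \<rho>_def using \<sigma> by simp
  define E where "E t = (\<Sum>k = 1..<l. a n k * x t k)" for t
  have "(E \<longlongrightarrow> 0) at_top"
    unfolding E_def using vanish by (intro tendsto_null_sum tendsto_mult_right_zero) auto
  moreover have "gap * \<rho> / 2 > 0" using gap_pos \<rho> by simp
  ultimately have ev_E: "eventually (\<lambda>t. E t < gap * \<rho> / 2) at_top"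
    by (rule order_tendstoD(2))
  define \<kappa> where "\<kappa> = b l * (gap * \<rho> / 2)"
  have bl: "b l > 0" using b_pos l1 by auto
  then have \<kappa>: "\<kappa> > 0" unfolding \<kappa>_def using gap_pos \<rho> by simp
  let ?w' = "\<lambda>t. b l * (\<Sum>k = 1..n. (a n k - a l k) * x t k)"
  show "eventually (\<lambda>t. log_ratio l t \<le> \<theta>) at_top"
  proof (rule eventually_below_by_drift[where w'="?w'", OF \<kappa>])
    show "eventually (\<lambda>t. (log_ratio l has_real_derivative ?w' t) (at t)) at_top"
      using eventually_gt_at_top[of 0] by (rule eventually_mono) (rule log_ratio_derivative[OF l1])
    have drift: "?w' t \<le> - \<kappa>"
      if "t > 0" "(\<Sum>k = l..n. x t k) \<ge> \<sigma>" "E t < gap * \<rho> / 2" "log_ratio l t > \<theta>" for t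
    proof -
      have "\<rho> \<le> (\<Sum>k = l..<n. x t k)"
        unfolding \<rho>_def using mass_below_last[OF l _ \<sigma>] that by simp
      then have "gap * \<rho> \<le> gap * (\<Sum>k = l..<n. x t k)"
        using gap_pos by simp
      then have "(\<Sum>k = 1..n. (a n k - a l k) * x t k) \<le> - (gap * \<rho> / 2)"
        using drift_bound[OF l, of t] that unfolding E_def by simp
      then have "?w' t \<le> b l * - (gap * \<rho> / 2)"
        using bl by (intro mult_left_mono) auto
      then show ?thesis
        unfolding \<kappa>_def by simp
    qed
    show "eventually (\<lambda>t. log_ratio l t > \<theta> \<longrightarrow> ?w' t \<le> - \<kappa>) at_top"
      using eventually_conj[OF eventually_gt_at_top[of 0] eventually_conj[OF ev_mass ev_E]]
      by (rule eventually_mono) (use drift in auto)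
  qed
qed

text \<open>Consequently species \<open>l\<close> dies out, as the last species stays bounded.\<close>
lemma species_vanishes_step:
  assumes l: "l \<in> {1..<n}"
    and vanish: "\<forall>k\<in>{1..<l}. ((\<lambda>t. x t k) \<longlongrightarrow> 0) at_top"
  shows "((\<lambda>t. x t l) \<longlongrightarrow> 0) at_top"
proof (rule tendsto_zero_of_ln_at_bot)
  have l1: "l \<in> {1..n}" and n: "n \<in> {1..n}" using l by auto
  show "eventually (\<lambda>t. x t l > 0) at_top"
    using eventually_ge_at_top[of 0] by (rule eventually_mono) (use species_pos l1 in auto)
  define B where "B = max (x 0 n) (1 / a n n)"
  define \<beta> where "\<beta> = b l / b n"
  have \<beta>: "\<beta> > 0" unfolding \<beta>_def using b_pos l1 n by auto
  have ln_le: "ln (x t l) \<le> log_ratio l t + \<beta> * ln B" if "t \<ge> 0" for t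
  proof -
    have "ln (x t n) \<le> ln B"
      unfolding B_def using bounded_above[OF that n] species_pos[OF that n] by simp
    then have "\<beta> * ln (x t n) \<le> \<beta> * ln B"
      using \<beta> by (intro mult_left_mono) auto
    then show ?thesis
      unfolding log_ratio_def \<beta>_def by simp
  qed
  show "filterlim (\<lambda>t. ln (x t l)) at_bot at_top"
    unfolding filterlim_at_bot
  proof
    fix Z :: real
    have "eventually (\<lambda>t. log_ratio l t \<le> Z - \<beta> * ln B) at_top"
      using log_ratio_at_bot[OF l vanish] unfolding filterlim_at_bot by blast
    then show "eventually (\<lambda>t. ln (x t l) \<le> Z) at_top"
      using eventually_ge_at_top[of 0]
      by (rule eventually_elim2) (use ln_le in fastforce)
  qed
qed

lemma species_vanishes: "l \<in> {1..<n} \<Longrightarrow> ((\<lambda>t. x t l) \<longlongrightarrow> 0) at_top"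
proof (induction l rule: less_induct)
  case (less l)
  then show ?case by (intro species_vanishes_step) auto
qed

end

theorem corollary4p6:
  fixes n :: nat and b :: "nat \<Rightarrow> real" and a :: "nat \<Rightarrow> nat \<Rightarrow> real"
  assumes n2: "n \<ge> 2"
    and b_pos: "\<forall>i\<in>{1..n}. b i > 0"
    and a_diag: "\<forall>i\<in>{1..n}. a i i > 0"
    and a_nonneg: "\<forall>i\<in>{1..n}. \<forall>j\<in>{1..n}. a i j \<ge> 0"
    and h1: "\<forall>l j. 1 \<le> l \<and> l < j \<and> j \<le> n \<longrightarrow> a j l < a l l"
    and h2: "\<forall>i j. 1 \<le> i \<and> i < j \<and> j \<le> n \<longrightarrow> a (i + 1) j \<le> a i j"
  shows "\<forall>x. LV_solution n b a x \<and> (\<forall>i\<in>{1..n}. x 0 i > 0) \<longrightarrow>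
           (\<forall>i\<in>{1..n}. ((\<lambda>t. x t i) \<longlongrightarrow> (if i = n then 1 / a n n else 0)) at_top)"
proof (intro allI impI ballI)
  fix x i
  assume x: "LV_solution n b a x \<and> (\<forall>i\<in>{1..n}. x 0 i > 0)" and i: "i \<in> {1..n}"
  interpret LV_dominated n b a x
    using assms x by unfold_locales auto
  show "((\<lambda>t. x t i) \<longlongrightarrow> (if i = n then 1 / a n n else 0)) at_top"
  proof (cases "i = n")
    case True
    then show ?thesis using last_species_limit species_vanishes by simp
  next
    case False
    then show ?thesis using species_vanishes i by simp
  qed
qed

end
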